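(* For each $i\in\{1,2,3,4\}$ and each $k$ there are complex numbers $\alpha_{m,i}(k)$, $m\in\mathbb Z/D\mathbb Z$, with $$q^{\epsilon_i}(q^{-1}M)^{-ab+p_i}Z^0_k=\sum_{m\in\mathbb Z/D\mathbb Z}\alpha_{m,i}(k)\,\Psi_{2km-ab+p_i},$$ and $\alpha_{0,i}(k)=\alpha_0(k)\,q^{-\frac{a^2+b^2}{D}+\frac D4}$ for all $i$, where $\alpha_0(k)=\langle Z^0_k,\Psi_0\rangle$ is the coefficient of $\Psi_0$ in $Z^0_k$.
   Context: Standing setup. $(E,\omega)$ is a real $2$-dimensional symplectic vector space with a compatible linear complex structure $j$; $K_j=\{\alpha\in E^*\otimes\mathbb C:\alpha(j\cdot)=i\alpha\}$. A half-form line is a complex line $\delta$ with an isomorphism $\varphi:\delta^{\otimes2}\to K_j$; $\delta$ carries the Hermitian metric making $\varphi$ an isometry. For $v\in E\setminus\{0\}$, $\Omega_v$ denotes a vector of $\delta$ with $\varphi(\Omega_v^2)(v)=1$ (unique up to sign). $L\to E$ is the trivial Hermitian line bundle with connection $d-i\alpha$, where $\alpha_x(y)=\frac12\omega(x,y)$, and the compatible holomorphic structure; sections of $L^k\otimes\delta$ are identified with functions $E\to\delta$. For $k\in\mathbb Z_{>0}$ and $x\in E$, $T^*_x$ acts on sections of $L^k\otimes\delta$ by $(T^*_x\Psi)(y)=e^{-\frac{ik}{2}\omega(x,y)}\Psi(x+y)$. For a lattice $\Lambda\subset E$, $\mathcal H^\Lambda_k$ is the space of holomorphic sections $\Psi$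 of $L^k\otimes\delta$ with $T^*_x\Psi=\Psi$ for all $x\in\Lambda$, with inner product $\langle\Psi_1,\Psi_2\rangle=\int_F\langle\Psi_1,\Psi_2\rangle_\delta\,|\omega|$ ($F$ a fundamental domain of $\Lambda$). For sequences, $O(k^{-\infty})$ means $O(k^{-N})$ for every $N$. Knot state. Fix relatively prime positive integers $a,b$; $D=2ab$. Fix a basis $(\lambda,\mu)$ of $E$ with $\omega(\mu,\lambda)=4\pi$. $\mathcal H_k=\mathcal H_k^{\lambda\mathbb Z\oplus\mu\mathbb Z}$; $M=T^*_{\mu/2k}$, $L=T^*_{-\lambda/2k}$ (operators), $q=e^{i\pi/k}$, $q^{s/D}=e^{i\pi s/(kD)}$ for rational $s$. Fix $\Omega_\mu$; $(\xi_\ell)_{\ell\in\mathbb Z/2k\mathbb Z}$ is the orthonormal basis of $\mathcal H_k$ with $M\xi_\ell=q^\ell\xi_\ell$, $L\xi_\ell=\xi_{\ell-1}$, $\xi_0(0)\in\mathbb R_{>0}\Omega_\mu$. $Z^0_k=-\frac{i}{2\sqrt k}\sum_{\ell\in\mathbb Z/2k\mathbb Z}\xi_\ell$. $(\epsilon_i,p_i)_{i=1,\dots,4}$ are $(1,-a-b)$, $(-1,-a+b)$, $(1,a+b)$, $(-1,a-b)$. Second lattice. $\Omega_\lambda$ is the (fixed, $k$-independent) choice of sign with $Z^0_k(0)=\frac{e^{3i\pi/4}}{\sqrt2}(\frac{k}{2\pi})^{1/4}\Omega_\lambda+O(k^{-\infty})$. $R_D=D\mu\mathbb Z\oplus\lambda\mathbb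 Z$, $\mathcal H_{D,k}=\mathcal H_k^{R_D}\supset\mathcal H_k$ ($\dim=2kD$). $S=T^*_{-\lambda/2kD}$, $R=T^*_{(D\mu-2\lambda)/2kD}$. $(\Psi_n)_{n\in\mathbb Z/2kD\mathbb Z}$ is the orthonormal basis of $\mathcal H_{D,k}$ with $S\Psi_n=q^{n/D}\Psi_n$, $R\Psi_n=\Psi_{n+1}$ and phase such that $\Psi_0(0)=e^{i\pi/4}(\frac k{2\pi})^{1/4}\Omega_\lambda+O(k^{-\infty})$. *)

theory Defs
  imports "HOL-Analysis.Analysis"
begin

text \<open>E = complex numbers as a real 2-dimensional space, j = multiplication by the imaginary unit,
  omega x y = Im (cnj x * y) (compatible: omega x (j x) = |x|^2 > 0).
  K_j = complex-linear forms z |-> c z, with the metric induced by g = omega(., j .),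
  so that the form z |-> z has norm sqrt 2.  The half-form line delta is modelled by the
  complex numbers with the standard metric, phi(u tensor u') is the form z |-> u u' z / sqrt 2
  (an isometry).  Sections of L^k tensor delta are functions complex to complex.\<close>

definition omega :: "complex \<Rightarrow> complex \<Rightarrow> real" where
  "omega x y = Im (cnj x * y)"

definition phi :: "complex \<Rightarrow> complex \<Rightarrow> complex" where
  "phi w = (\<lambda>z. w * z / complex_of_real (sqrt 2))"

definition is_Omega :: "complex \<Rightarrow> complex \<Rightarrow> bool" where
  "is_Omega v u \<longleftrightarrow> phi (u * u) v = 1"

definition Tstar :: "nat \<Rightarrow> complex \<Rightarrow> (complex \<Rightarrow> complex) \<Rightarrow> (complex \<Rightarrow> complex)" where
  "Tstar k x \<Psi> = (\<lambda>y. exp (- (\<i> * complex_of_real (real k / 2 * omega x y))) * \<Psi> (x + y))"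

text \<open>Holomorphic sections of L^k tensor delta: for the connection d - i k alpha the
  holomorphic (i.e. nabla^{0,1}-flat) sections are exactly exp(-k|z|^2/4) times entire functions.\<close>
definition holo_sec :: "nat \<Rightarrow> (complex \<Rightarrow> complex) \<Rightarrow> bool" where
  "holo_sec k \<Psi> \<longleftrightarrow> (\<exists>f. f holomorphic_on UNIV \<and>
      (\<forall>z. \<Psi> z = complex_of_real (exp (- (real k * (cmod z)\<^sup>2 / 4))) * f z))"

definition lattice :: "complex \<Rightarrow> complex \<Rightarrow> complex set" where
  "lattice e1 e2 = {of_int m * e1 + of_int n * e2 | m n. True}"

definition Hspace :: "nat \<Rightarrow> complex \<Rightarrow> complex \<Rightarrow> (complex \<Rightarrow> complex) set" where
  "Hspace k e1 e2 = {\<Psi>. holo_sec k \<Psi> \<and> (\<forall>x\<in>lattice e1 e2. Tstar k x \<Psi> = \<Psi>)}"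

definition fund_dom :: "complex \<Rightarrow> complex \<Rightarrow> complex set" where
  "fund_dom e1 e2 = {s *\<^sub>R e1 + t *\<^sub>R e2 | s t. 0 \<le> s \<and> s < 1 \<and> 0 \<le> t \<and> t < 1}"

text \<open>Inner product: integral over a fundamental domain w.r.t. |omega| (= Lebesgue measure).\<close>
definition innerH :: "complex \<Rightarrow> complex \<Rightarrow> (complex \<Rightarrow> complex) \<Rightarrow> (complex \<Rightarrow> complex) \<Rightarrow> complex" where
  "innerH e1 e2 \<Psi>1 \<Psi>2 = (LINT z:fund_dom e1 e2|lborel. \<Psi>1 z * cnj (\<Psi>2 z))"

text \<open>B, indexed by Z/NZ (as int-indexed, N-periodic), is an orthonormal basis of H^Lambda_k.\<close>
definition is_onb :: "nat \<Rightarrow> complex \<Rightarrow> complex \<Rightarrow> int \<Rightarrow> (int \<Rightarrow> complex \<Rightarrow> complex) \<Rightarrow> bool" where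
  "is_onb k e1 e2 N B \<longleftrightarrow>
     (\<forall>n. B n = B (n mod N)) \<and>
     (\<forall>n\<in>{0..<N}. B n \<in> Hspace k e1 e2) \<and>
     (\<forall>n\<in>{0..<N}. \<forall>m\<in>{0..<N}. innerH e1 e2 (B n) (B m) = (if n = m then 1 else 0)) \<and>
     (\<forall>\<Psi>\<in>Hspace k e1 e2. \<exists>c. \<Psi> = (\<lambda>z. \<Sum>n\<in>{0..<N}. c n * B n z))"

definition qpow :: "nat \<Rightarrow> real \<Rightarrow> complex" where
  "qpow k s = exp (\<i> * complex_of_real (pi * s / real k))"

definition Mop :: "nat \<Rightarrow> complex \<Rightarrow> (complex \<Rightarrow> complex) \<Rightarrow> (complex \<Rightarrow> complex)" where
  "Mop k mu = Tstar k (mu / of_nat (2 * k))"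

definition Lop :: "nat \<Rightarrow> complex \<Rightarrow> (complex \<Rightarrow> complex) \<Rightarrow> (complex \<Rightarrow> complex)" where
  "Lop k lam = Tstar k (- lam / of_nat (2 * k))"

definition Sop :: "nat \<Rightarrow> nat \<Rightarrow> complex \<Rightarrow> (complex \<Rightarrow> complex) \<Rightarrow> (complex \<Rightarrow> complex)" where
  "Sop D k lam = Tstar k (- lam / of_nat (2 * k * D))"

definition Rop :: "nat \<Rightarrow> nat \<Rightarrow> complex \<Rightarrow> complex \<Rightarrow> (complex \<Rightarrow> complex) \<Rightarrow> (complex \<Rightarrow> complex)" where
  "Rop D k lam mu = Tstar k ((of_nat D * mu - 2 * lam) / of_nat (2 * k * D))"

definition ipow :: "('a \<Rightarrow> 'a) \<Rightarrow> int \<Rightarrow> 'a \<Rightarrow> 'a" where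
  "ipow T n = (if 0 \<le> n then T ^^ nat n else (inv T) ^^ nat (- n))"

definition is_xi_basis :: "nat \<Rightarrow> complex \<Rightarrow> complex \<Rightarrow> complex \<Rightarrow> (int \<Rightarrow> complex \<Rightarrow> complex) \<Rightarrow> bool" where
  "is_xi_basis k lam mu Om_mu B \<longleftrightarrow>
     is_onb k lam mu (2 * int k) B \<and>
     (\<forall>l. Mop k mu (B l) = (\<lambda>z. qpow k (real_of_int l) * B l z)) \<and>
     (\<forall>l. Lop k lam (B l) = B (l - 1)) \<and>
     (\<exists>r>0. B 0 0 = complex_of_real r * Om_mu)"

text \<open>The basis (Psi_n) of H_{D,k} (up to its global phase normalisation).\<close>
definition is_Psi_basis :: "nat \<Rightarrow> nat \<Rightarrow> complex \<Rightarrow> complex \<Rightarrow> (int \<Rightarrow> complex \<Rightarrow> complex) \<Rightarrow> bool" where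
  "is_Psi_basis D k lam mu B \<longleftrightarrow>
     is_onb k (of_nat D * mu) lam (2 * int k * int D) B \<and>
     (\<forall>n. Sop D k lam (B n) = (\<lambda>z. qpow k (real_of_int n / real D) * B n z)) \<and>
     (\<forall>n. Rop D k lam mu (B n) = B (n + 1))"

definition Z0 :: "nat \<Rightarrow> (int \<Rightarrow> complex \<Rightarrow> complex) \<Rightarrow> complex \<Rightarrow> complex" where
  "Z0 k B = (\<lambda>z. - (\<i> / (2 * complex_of_real (sqrt (real k)))) * (\<Sum>l\<in>{0..<2 * int k}. B l z))"

definition rapid_decay :: "(nat \<Rightarrow> complex) \<Rightarrow> bool" where
  "rapid_decay f \<longleftrightarrow> (\<forall>N::nat. \<exists>C. \<forall>\<^sub>F k in sequentially. cmod (f k) \<le> C / real k ^ N)"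

definition eps_i :: "nat \<Rightarrow> real" where
  "eps_i i = (if i = 1 \<or> i = 3 then 1 else -1)"

definition p_i :: "nat \<Rightarrow> nat \<Rightarrow> nat \<Rightarrow> int" where
  "p_i a b i = (if i = 1 then - int a - int b else if i = 2 then - int a + int b
               else if i = 3 then int a + int b else int a - int b)"

end

theory Submission
  imports Defs
begin

(*
  Proof idea.  Write D = 2ab, s = -lambda/(2kD) (the vector of S) and
  r = (D mu - 2 lambda)/(2kD) (the vector of R), and put A = q^(-1) M.

  (1) Since mu/(2k) = r - 2s, the cocycle rule for the Heisenberg translations T^*_x
      shows that M maps Psi_n to a phase times Psi_(n+1); iterating, every integer
      power A^N maps Psi_n to q^(shift_phase D n N) Psi_(n+N), a quadratic phase.
  (2) Z^0_k is a combination of the xi_l, hence lies in H_{D,k}, and it is invariant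
      under L = T^*_(-lambda/2k) because L permutes the xi_l cyclically.  Since
      L = S^D acts on Psi_n by q^n, averaging over the 2k powers of L kills every Psi_n
      with n not divisible by 2k:  Z^0_k = sum_m <Z^0_k, Psi_(2km)> Psi_(2km).
  (3) Applying A^N termwise gives the expansion of the theorem, with alpha_m equal to
      q^eps_i <Z^0_k, Psi_(2km)> q^(shift_phase D (2km) N); for m = 0 the phase
      eps_i + shift_phase D 0 (p_i - ab) equals -(a^2+b^2)/D + D/4 for all four i.
*)

section \<open>The symplectic form\<close>

lemma omega_add_left: "omega (x + y) z = omega x z + omega y z"
  by (simp add: omega_def algebra_simps)

lemma omega_add_right: "omega z (x + y) = omega z x + omega z y"
  by (simp add: omega_def algebra_simps)

lemma omega_scale_left: "omega (of_real r * u) v = r * omega u v"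
  by (simp add: omega_def algebra_simps)

lemma omega_scale_right: "omega u (of_real r * v) = r * omega u v"
  by (simp add: omega_def algebra_simps)

lemma omega_self [simp]: "omega x x = 0"
  by (simp add: omega_def)

lemma omega_zero_left [simp]: "omega 0 y = 0"
  by (simp add: omega_def)

lemma omega_parallel: "omega (x * of_real r) (x * of_real s) = 0"
  by (simp add: omega_def algebra_simps)

lemma omega_antisym: "omega y x = - omega x y"
  by (simp add: omega_def)

definition lin :: "((complex \<Rightarrow> complex) \<Rightarrow> (complex \<Rightarrow> complex)) \<Rightarrow> bool" where
  "lin T \<longleftrightarrow> (\<forall>(S::int set) c F. T (\<lambda>z. \<Sum>m\<in>S. c m * F m z) = (\<lambda>z. \<Sum>m\<in>S. c m * T (F m) z))"

lemma lin_scal: "lin T \<Longrightarrow> T (\<lambda>z. c * F z) = (\<lambda>z. c * T F z)"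
  unfolding lin_def
  by (erule allE[of _ "{0}"], erule allE[of _ "\<lambda>_. c"], erule allE[of _ "\<lambda>_. F"]) simp

lemma lin_cmul: "lin T \<Longrightarrow> lin (\<lambda>\<Phi> w. a * T \<Phi> w)"
  unfolding lin_def by (simp add: sum_distrib_left mult.left_commute)

lemma lin_funpow: "lin T \<Longrightarrow> lin (T ^^ n)"
  by (induction n) (simp_all add: lin_def)

lemma lin_eigen_funpow:
  assumes "lin T" "T F = (\<lambda>z. c * F z)"
  shows "(T ^^ j) F = (\<lambda>z. c ^ j * F z)"
proof (induction j)
  case (Suc j)
  have "(T ^^ Suc j) F = T (\<lambda>z. c ^ j * F z)" using Suc by simp
  also have "\<dots> = (\<lambda>z. c ^ j * T F z)" by (rule lin_scal[OF assms(1)])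
  also have "\<dots> = (\<lambda>z. c ^ Suc j * F z)" using assms(2) by (simp add: algebra_simps)
  finally show ?case .
qed simp

section \<open>Heisenberg translations\<close>

lemma lin_Tstar: "lin (Tstar k x)"
  by (simp add: lin_def Tstar_def fun_eq_iff sum_distrib_left mult.left_commute)

lemma Tstar_zero [simp]: "Tstar k 0 F = F"
  by (simp add: Tstar_def)

lemma Tstar_scal: "Tstar k x (\<lambda>z. c * F z) = (\<lambda>z. c * Tstar k x F z)"
  by (rule lin_scal[OF lin_Tstar])

lemma Tstar_sum: "Tstar k x (\<lambda>z. \<Sum>m\<in>S. F m z) = (\<lambda>z. \<Sum>m\<in>S. Tstar k x (F m) z)"
  by (simp add: Tstar_def fun_eq_iff sum_distrib_left)

lemma Tstar_comp:
  "Tstar k x (Tstar k y F) =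
     (\<lambda>z. exp (- (\<i> * complex_of_real (real k / 2 * omega y x))) * Tstar k (x + y) F z)"
proof
  fix z
  have phases: "exp (- (\<i> * complex_of_real (real k / 2 * omega x z))) *
       exp (- (\<i> * complex_of_real (real k / 2 * omega y (x + z)))) =
      exp (- (\<i> * complex_of_real (real k / 2 * omega y x))) *
       exp (- (\<i> * complex_of_real (real k / 2 * omega (x + y) z)))"
    by (simp add: exp_add[symmetric] omega_add_left omega_add_right algebra_simps)
  have arg: "y + (x + z) = x + y + z" by (simp add: algebra_simps)
  have "Tstar k x (Tstar k y F) z = exp (- (\<i> * complex_of_real (real k / 2 * omega x z)))
     * (exp (- (\<i> * complex_of_real (real k / 2 * omega y (x + z)))) * F (y + (x + z)))"
    by (simp add: Tstar_def)
  also have "\<dots> = exp (- (\<i> * complex_of_real (real k / 2 * omega y x))) *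
     (exp (- (\<i> * complex_of_real (real k / 2 * omega (x + y) z))) * F (x + y + z))"
    by (simp only: arg mult.assoc[symmetric] phases)
  also have "\<dots> = exp (- (\<i> * complex_of_real (real k / 2 * omega y x))) * Tstar k (x + y) F z"
    by (simp add: Tstar_def)
  finally show "Tstar k x (Tstar k y F) z =
      exp (- (\<i> * complex_of_real (real k / 2 * omega y x))) * Tstar k (x + y) F z" .
qed

lemma Tstar_neg_cancel: "Tstar k (- x) (Tstar k x F) = F"
  by (simp add: Tstar_comp omega_def)

lemma Tstar_cancel_neg: "Tstar k x (Tstar k (- x) F) = F"
  by (simp add: Tstar_comp omega_def)

text \<open>Translations along one line commute without phase, so T^*_x iterated n times is T^*_(nx).\<close>

lemma Tstar_parallel:
  "Tstar k (of_real r * x) (Tstar k (of_real s * x) F) = Tstar k (of_real (r + s) * x) F"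
  by (simp add: Tstar_comp omega_parallel algebra_simps)

lemma Tstar_funpow: "(Tstar k x ^^ n) F = Tstar k (of_nat n * x) F"
proof (induction n)
  case 0 then show ?case by (simp add: Tstar_def)
next
  case (Suc n)
  have "(Tstar k x ^^ Suc n) F = Tstar k (of_real 1 * x) (Tstar k (of_real (real n) * x) F)"
    using Suc by simp
  also have "\<dots> = Tstar k (of_nat (Suc n) * x) F"
    by (subst Tstar_parallel) (simp add: add.commute)
  finally show ?case .
qed

lemma Tstar_multiple_eigen:
  "Tstar k x F = (\<lambda>z. c * F z) \<Longrightarrow> Tstar k (of_nat j * x) F = (\<lambda>z. c ^ j * F z)"
  using lin_eigen_funpow[OF lin_Tstar] by (simp add: Tstar_funpow)

lemma Tstar_neg_eigen:
  assumes "Tstar k x F = (\<lambda>z. c * F z)" "c \<noteq> 0"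
  shows "Tstar k (- x) F = (\<lambda>z. inverse c * F z)"
proof -
  have "(\<lambda>z. c * Tstar k (- x) F z) = F"
    using Tstar_neg_cancel[of k x F] assms(1) by (simp add: Tstar_scal)
  then show ?thesis using assms(2) by (auto simp: fun_eq_iff field_simps)
qed

lemma qpow_add: "qpow k (s + t) = qpow k s * qpow k t"
  by (simp add: qpow_def exp_add[symmetric] algebra_simps add_divide_distrib)

lemma qpow_pow: "qpow k s ^ j = qpow k (real j * s)"
  by (simp add: qpow_def exp_of_nat_mult[symmetric] algebra_simps)

lemma qpow_inverse: "inverse (qpow k s) = qpow k (- s)"
  by (simp add: qpow_def exp_minus)

lemma qpow_nonzero [simp]: "qpow k s \<noteq> 0"
  by (simp add: qpow_def)

lemma qpow_int_eq_1_iff: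
  assumes k: "0 < k"
  shows "qpow k (real_of_int n) = 1 \<longleftrightarrow> 2 * int k dvd n"
proof -
  have "pi * real_of_int n / real k = real_of_int (2 * j) * pi \<longleftrightarrow> n = 2 * int k * j" for j
  proof -
    have "pi * real_of_int n / real k = real_of_int (2 * j) * pi
          \<longleftrightarrow> real_of_int n = real_of_int (2 * int k * j)"
      using k pi_gt_zero by (auto simp: field_simps)
    then show ?thesis by (simp only: of_int_eq_iff)
  qed
  then show ?thesis
    unfolding qpow_def exp_eq_1 by (auto simp: dvd_def)
qed

lemma qpow_average:
  assumes k: "0 < k"
  shows "(\<Sum>j<2 * k. qpow k (real_of_int n) ^ j) / of_nat (2 * k) =
         (if 2 * int k dvd n then 1 else 0)"
proof (cases "2 * int k dvd n")
  case True
  then have "qpow k (real_of_int n) = 1" using qpow_int_eq_1_iff[OF k] by simp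
  then show ?thesis using True k by simp
next
  case False
  then have ne: "qpow k (real_of_int n) \<noteq> 1" using qpow_int_eq_1_iff[OF k] by simp
  have "qpow k (real_of_int n) ^ (2 * k) = qpow k (real (2 * k) * real_of_int n)"
    by (rule qpow_pow)
  also have "\<dots> = 1" unfolding qpow_def using k by (simp add: exp_eq_1)
  finally have "qpow k (real_of_int n) ^ (2 * k) = 1" .
  then have "(\<Sum>j<2 * k. qpow k (real_of_int n) ^ j) = 0"
    using geometric_sum[OF ne, of "2 * k"] by simp
  then show ?thesis using False by simp
qed


section \<open>The operator A = q^(-1) M and its inverse\<close>

definition Aop :: "nat \<Rightarrow> complex \<Rightarrow> (complex \<Rightarrow> complex) \<Rightarrow> (complex \<Rightarrow> complex)" where
  "Aop k mu = (\<lambda>\<Phi> w. qpow k (-1) * Mop k mu \<Phi> w)"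

definition Bop :: "nat \<Rightarrow> complex \<Rightarrow> (complex \<Rightarrow> complex) \<Rightarrow> (complex \<Rightarrow> complex)" where
  "Bop k mu = (\<lambda>\<Phi> w. qpow k 1 * Tstar k (- (mu / of_nat (2 * k))) \<Phi> w)"

lemma qpow_neg_one_one: "qpow k (-1) * qpow k 1 = 1"
  unfolding qpow_add[symmetric] by (simp add: qpow_def)

lemma Bop_Aop: "Bop k mu (Aop k mu F) = F"
  unfolding Aop_def Bop_def Mop_def Tstar_scal Tstar_neg_cancel
  by (simp add: mult.assoc[symmetric] qpow_neg_one_one mult.commute[of "qpow k 1"])

lemma Aop_Bop: "Aop k mu (Bop k mu F) = F"
  unfolding Aop_def Bop_def Mop_def Tstar_scal Tstar_cancel_neg
  by (simp add: mult.assoc[symmetric] qpow_neg_one_one)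

lemma inv_Aop: "inv (Aop k mu) = Bop k mu"
  by (rule inv_equality) (rule Bop_Aop, rule Aop_Bop)

lemma lin_Aop: "lin (Aop k mu)"
  unfolding Aop_def Mop_def by (intro lin_cmul lin_Tstar)

lemma lin_Bop: "lin (Bop k mu)"
  unfolding Bop_def by (intro lin_cmul lin_Tstar)

lemma lin_ipow_Aop: "lin (ipow (Aop k mu) N)"
  unfolding ipow_def inv_Aop by (simp add: lin_funpow lin_Aop lin_Bop)

text \<open>The exponent of q picked up by A^N on Psi_n: it is quadratic in n and N.\<close>

definition shift_phase :: "nat \<Rightarrow> int \<Rightarrow> int \<Rightarrow> real" where
  "shift_phase D n N = - real_of_int N - (real_of_int ((n + N)^2) - real_of_int (n^2)) / real D"

lemma shift_phase_succ:
  "0 < D \<Longrightarrow> shift_phase D n j + (-1 - (2 * real_of_int (n + j) + 1) / real D) =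
     shift_phase D n (j + 1)"
  unfolding shift_phase_def by (simp add: field_simps power2_eq_square)

lemma shift_phase_pred:
  "0 < D \<Longrightarrow> shift_phase D n (- j) + (1 + (2 * real_of_int (n - j - 1) + 1) / real D) =
     shift_phase D n (- (j + 1))"
  unfolding shift_phase_def by (simp add: field_simps power2_eq_square)

section \<open>Action of the operators on the basis Psi\<close>

context
  fixes D k :: nat and lam mu :: complex and Psi :: "int \<Rightarrow> complex \<Rightarrow> complex"
  assumes kpos: "0 < k" and Dpos: "0 < D"
    and om: "omega mu lam = 4 * pi"
    and PB: "is_Psi_basis D k lam mu Psi"
begin

lemma S_eigen:
  "Tstar k (- lam / of_nat (2 * k * D)) (Psi n) = (\<lambda>z. qpow k (real_of_int n / real D) * Psi n z)"
  using PB unfolding is_Psi_basis_def Sop_def by blast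

text \<open>L = S^D, so L acts on Psi_n by q^n.\<close>

lemma L_eigen: "Lop k lam (Psi n) = (\<lambda>z. qpow k (real_of_int n) * Psi n z)"
proof -
  have vec: "- lam / of_nat (2 * k) = of_nat D * (- lam / of_nat (2 * k * D))"
    using Dpos kpos by (simp add: field_simps)
  have "Lop k lam (Psi n) = (\<lambda>z. qpow k (real_of_int n / real D) ^ D * Psi n z)"
    unfolding Lop_def vec by (rule Tstar_multiple_eigen[OF S_eigen])
  then show ?thesis using Dpos by (simp add: qpow_pow)
qed

lemma S_inverse_square_eigen:
  "Tstar k (lam / of_nat (k * D)) (Psi n) = (\<lambda>z. qpow k (- 2 * real_of_int n / real D) * Psi n z)"
proof -
  have vec: "lam / of_nat (k * D) = of_nat 2 * (- (- lam / of_nat (2 * k * D)))"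
    using Dpos kpos by (simp add: field_simps)
  have "Tstar k (lam / of_nat (k * D)) (Psi n) =
      (\<lambda>z. inverse (qpow k (real_of_int n / real D)) ^ 2 * Psi n z)"
    unfolding vec by (rule Tstar_multiple_eigen[OF Tstar_neg_eigen[OF S_eigen qpow_nonzero]])
  then show ?thesis by (simp add: qpow_inverse qpow_pow)
qed

text \<open>M shifts the basis: since mu/(2k) = r + 2 lambda/(2kD) with r the vector of R,
  the cocycle rule gives M Psi_n = q^(-(2n+1)/D) Psi_(n+1).\<close>

lemma M_shift:
  "Mop k mu (Psi n) = (\<lambda>z. qpow k (- (2 * real_of_int n + 1) / real D) * Psi (n + 1) z)"
proof -
  define r where "r = (of_nat D * mu - 2 * lam) / of_nat (2 * k * D)"
  define w where "w = lam / of_nat (k * D)"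
  have R: "Tstar k r (Psi m) = Psi (m + 1)" for m
    using PB unfolding is_Psi_basis_def Rop_def r_def by blast
  have r_split: "r = of_real (1 / (2 * k)) * mu + of_real (- 1 / (k * D)) * lam"
    unfolding r_def using kpos Dpos by (simp add: field_simps)
  have w_scaled: "w = of_real (1 / (k * D)) * lam"
    unfolding w_def by (simp add: field_simps)
  have sum_rw: "r + w = mu / of_nat (2 * k)"
    unfolding r_split w_scaled using kpos Dpos by (simp add: field_simps)
  have "omega w r = (1 / (k * D)) * (1 / (2 * k)) * omega lam mu"
    unfolding w_scaled r_split
    by (simp only: omega_add_right omega_scale_left omega_scale_right omega_self) simp
  then have omega_wr: "omega w r = - 2 * pi / (real k ^ 2 * D)"
    using kpos Dpos omega_antisym[of lam mu] om by (simp add: field_simps power2_eq_square)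
  have phase: "exp (- (\<i> * complex_of_real (real k / 2 * omega w r))) = qpow k (1 / real D)"
    unfolding omega_wr qpow_def using kpos Dpos by (simp add: field_simps power2_eq_square)
  have "(\<lambda>z. qpow k (1 / real D) * Mop k mu (Psi n) z) = Tstar k r (Tstar k w (Psi n))"
    unfolding Tstar_comp phase Mop_def sum_rw ..
  also have "\<dots> = (\<lambda>z. qpow k (- 2 * real_of_int n / real D) * Psi (n + 1) z)"
    unfolding w_def S_inverse_square_eigen Tstar_scal R ..
  finally have "Mop k mu (Psi n) z =
      inverse (qpow k (1 / real D)) * qpow k (- 2 * real_of_int n / real D) * Psi (n + 1) z" for z
    by (simp add: fun_eq_iff field_simps)
  moreover have "- 1 / real D + - 2 * real_of_int n / real D = - (2 * real_of_int n + 1) / real D"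
    using Dpos by (simp add: field_simps)
  ultimately show ?thesis
    unfolding qpow_inverse by (simp add: qpow_add[symmetric] fun_eq_iff)
qed

lemma A_shift:
  "Aop k mu (Psi n) = (\<lambda>z. qpow k (-1 - (2 * real_of_int n + 1) / real D) * Psi (n + 1) z)"
  unfolding Aop_def M_shift diff_conv_add_uminus divide_minus_left[symmetric] qpow_add
  by (simp add: mult.assoc)

lemma B_shift:
  "Bop k mu (Psi (n + 1)) = (\<lambda>z. qpow k (1 + (2 * real_of_int n + 1) / real D) * Psi n z)"
proof -
  have "(\<lambda>z. qpow k (-1 - (2 * real_of_int n + 1) / real D) * Bop k mu (Psi (n + 1)) z) = Psi n"
    using Bop_Aop[of k mu "Psi n"] unfolding A_shift lin_scal[OF lin_Bop] .
  then have "Bop k mu (Psi (n + 1)) z =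
      inverse (qpow k (-1 - (2 * real_of_int n + 1) / real D)) * Psi n z" for z
    by (auto simp: fun_eq_iff field_simps)
  then show ?thesis unfolding qpow_inverse by (simp add: fun_eq_iff add.commute)
qed

lemma A_funpow:
  "(Aop k mu ^^ j) (Psi n) = (\<lambda>z. qpow k (shift_phase D n (int j)) * Psi (n + int j) z)"
proof (induction j)
  case 0 then show ?case by (simp add: shift_phase_def qpow_def)
next
  case (Suc j)
  have "(Aop k mu ^^ Suc j) (Psi n) =
      Aop k mu (\<lambda>z. qpow k (shift_phase D n (int j)) * Psi (n + int j) z)"
    using Suc by simp
  also have "\<dots> = (\<lambda>z. qpow k (shift_phase D n (int j)) *
      (qpow k (-1 - (2 * real_of_int (n + int j) + 1) / real D) * Psi (n + int j + 1) z))"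
    unfolding lin_scal[OF lin_Aop] A_shift ..
  also have "\<dots> = (\<lambda>z. qpow k (shift_phase D n (int (Suc j))) * Psi (n + int (Suc j)) z)"
    unfolding mult.assoc[symmetric] qpow_add[symmetric] shift_phase_succ[OF Dpos]
    by (simp only: of_nat_Suc add.commute[of 1 "int j"] add.assoc)
  finally show ?case .
qed

lemma B_funpow:
  "(Bop k mu ^^ j) (Psi n) = (\<lambda>z. qpow k (shift_phase D n (- int j)) * Psi (n - int j) z)"
proof (induction j)
  case 0 then show ?case by (simp add: shift_phase_def qpow_def)
next
  case (Suc j)
  have "(Bop k mu ^^ Suc j) (Psi n) =
      Bop k mu (\<lambda>z. qpow k (shift_phase D n (- int j)) * Psi (n - int j - 1 + 1) z)"
    using Suc by simp
  also have "\<dots> = (\<lambda>z. qpow k (shift_phase D n (- int j)) *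
      (qpow k (1 + (2 * real_of_int (n - int j - 1) + 1) / real D) * Psi (n - int j - 1) z))"
    unfolding lin_scal[OF lin_Bop] B_shift ..
  also have "\<dots> = (\<lambda>z. qpow k (shift_phase D n (- int (Suc j))) * Psi (n - int (Suc j)) z)"
    unfolding mult.assoc[symmetric] qpow_add[symmetric] shift_phase_pred[OF Dpos]
    by (simp only: of_nat_Suc add.commute[of 1 "int j"] diff_diff_eq)
  finally show ?case .
qed

lemma ipow_A_Psi:
  "ipow (Aop k mu) N (Psi n) = (\<lambda>z. qpow k (shift_phase D n N) * Psi (n + N) z)"
proof (cases "0 \<le> N")
  case True
  then show ?thesis unfolding ipow_def using A_funpow[of "nat N" n] by simp
next
  case False
  then show ?thesis unfolding ipow_def inv_Aop using B_funpow[of "nat (- N)" n] by simp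
qed

end


lemma sum_mod_shift:
  fixes N c :: int and f :: "int \<Rightarrow> 'a::comm_monoid_add"
  assumes "0 < N"
  shows "(\<Sum>l\<in>{0..<N}. f ((l + c) mod N)) = (\<Sum>l\<in>{0..<N}. f l)"
proof (rule sum.reindex_bij_witness[where i = "\<lambda>l. (l - c) mod N" and j = "\<lambda>l. (l + c) mod N"])
  fix l assume l: "l \<in> {0..<N}"
  have "((l + c) mod N - c) mod N = (l + c - c) mod N" by (simp add: mod_diff_left_eq)
  then show "((l + c) mod N - c) mod N = l" using l by simp
  have "((l - c) mod N + c) mod N = (l - c + c) mod N" by (simp add: mod_add_left_eq)
  then show "((l - c) mod N + c) mod N = l" using l by simp
qed (use assms in auto)

lemma sum_multiples:
  fixes K D :: nat and g :: "int \<Rightarrow> 'a::comm_monoid_add"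
  assumes "0 < K"
  shows "(\<Sum>n\<in>{0..<int K * int D}. if int K dvd n then g n else 0) = (\<Sum>m\<in>{0..<int D}. g (int K * m))"
proof -
  have multiples: "{n\<in>{0..<int K * int D}. int K dvd n} = (\<lambda>m. int K * m) ` {0..<int D}"
  proof (rule set_eqI, rule iffI)
    fix n assume "n \<in> {n\<in>{0..<int K * int D}. int K dvd n}"
    then obtain m where n: "n = int K * m" and b: "0 \<le> int K * m" "int K * m < int K * int D"
      by auto
    have "0 \<le> m" "m < int D" using b assms by (simp_all add: zero_le_mult_iff)
    then show "n \<in> (\<lambda>m. int K * m) ` {0..<int D}" using n by auto
  qed (use assms in auto)
  have "(\<Sum>n\<in>{0..<int K * int D}. if int K dvd n then g n else 0) =
      sum g {n\<in>{0..<int K * int D}. int K dvd n}"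
    by (rule sum.inter_filter[symmetric]) simp
  also have "\<dots> = (\<Sum>m\<in>{0..<int D}. g (int K * m))"
    unfolding multiples by (rule sum.reindex_cong[where l = "\<lambda>m. int K * m"])
      (use assms in \<open>auto simp: inj_on_def\<close>)
  finally show ?thesis .
qed

section \<open>Coefficients of an orthonormal expansion are inner products\<close>

text \<open>The two coordinates of z in the basis (e1, e2) are omega(z,e2) and omega(e1,z), up to
  the factor omega(e1,e2); hence the fundamental domain is a Borel set.\<close>

lemma omega_decomp: "omega z e2 *\<^sub>R e1 + omega e1 z *\<^sub>R e2 = omega e1 e2 *\<^sub>R z"
  by (simp add: omega_def complex_eq_iff algebra_simps scaleR_conv_of_real)

lemma fund_dom_eq:
  assumes w: "omega e1 e2 \<noteq> 0"
  shows "fund_dom e1 e2 =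
    (\<lambda>z. omega z e2 / omega e1 e2) -` {0..<1} \<inter> (\<lambda>z. omega e1 z / omega e1 e2) -` {0..<1}"
proof (rule set_eqI, rule iffI)
  fix z assume "z \<in> fund_dom e1 e2"
  then obtain s t where z: "z = s *\<^sub>R e1 + t *\<^sub>R e2" and st: "0 \<le> s" "s < 1" "0 \<le> t" "t < 1"
    unfolding fund_dom_def by blast
  have "omega z e2 = s * omega e1 e2" "omega e1 z = t * omega e1 e2"
    unfolding z scaleR_conv_of_real
    by (simp_all add: omega_add_left omega_add_right omega_scale_left omega_scale_right)
  then show "z \<in> (\<lambda>z. omega z e2 / omega e1 e2) -` {0..<1} \<inter> (\<lambda>z. omega e1 z / omega e1 e2) -` {0..<1}"
    using st w by simp
next
  fix z
  assume "z \<in> (\<lambda>z. omega z e2 / omega e1 e2) -` {0..<1} \<inter> (\<lambda>z. omega e1 z / omega e1 e2) -` {0..<1}"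
  then have st: "0 \<le> omega z e2 / omega e1 e2" "omega z e2 / omega e1 e2 < 1"
    "0 \<le> omega e1 z / omega e1 e2" "omega e1 z / omega e1 e2 < 1" by auto
  have "(1 / omega e1 e2) *\<^sub>R (omega z e2 *\<^sub>R e1 + omega e1 z *\<^sub>R e2) = z"
    unfolding omega_decomp using w by simp
  then have "z = (omega z e2 / omega e1 e2) *\<^sub>R e1 + (omega e1 z / omega e1 e2) *\<^sub>R e2"
    by (simp add: scaleR_add_right)
  then show "z \<in> fund_dom e1 e2" unfolding fund_dom_def using st by blast
qed

lemma fund_dom_sets:
  assumes w: "omega e1 e2 \<noteq> 0"
  shows "fund_dom e1 e2 \<in> sets lborel"
proof -
  have "(\<lambda>z. omega z e2 / omega e1 e2) \<in> borel_measurable borel"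
       "(\<lambda>z. omega e1 z / omega e1 e2) \<in> borel_measurable borel"
    unfolding omega_def divide_inverse
    by (intro borel_measurable_continuous_onI continuous_intros)+
  from this[THEN measurable_sets, of "{0..<1}"] show ?thesis
    unfolding fund_dom_eq[OF w] by auto
qed

lemma holo_sec_continuous: "holo_sec k F \<Longrightarrow> continuous_on UNIV F"
proof -
  assume "holo_sec k F"
  then obtain f where f: "f holomorphic_on UNIV"
    and F: "F = (\<lambda>z. complex_of_real (exp (- (real k * (cmod z)\<^sup>2 / 4))) * f z)"
    unfolding holo_sec_def by blast
  have "continuous_on UNIV f" using f by (rule holomorphic_on_imp_continuous_on)
  then show ?thesis unfolding F by (intro continuous_intros) auto
qed

text \<open>Products B_n conj(B_m) of elements of an orthonormal basis are integrable over the
  fundamental domain: the diagonal ones are, since their integral is 1, and they dominate.\<close>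

lemma onb_products_integrable:
  assumes onb: "is_onb k e1 e2 N B" and w: "omega e1 e2 \<noteq> 0"
    and n: "n \<in> {0..<N}" and m: "m \<in> {0..<N}"
  shows "set_integrable lborel (fund_dom e1 e2) (\<lambda>z. B n z * cnj (B m z))"
proof -
  let ?A = "fund_dom e1 e2"
  have diag: "set_integrable lborel ?A (\<lambda>z. B j z * cnj (B j z))" if j: "j \<in> {0..<N}" for j
  proof (rule ccontr)
    assume "\<not> ?thesis"
    then have "innerH e1 e2 (B j) (B j) = 0"
      unfolding innerH_def set_lebesgue_integral_def set_integrable_def
      by (rule not_integrable_integral_eq)
    then show False using onb j unfolding is_onb_def by auto
  qed
  have cont: "continuous_on UNIV (B j)" if "j \<in> {0..<N}" for j
    using onb that unfolding is_onb_def Hspace_def by (blast intro: holo_sec_continuous)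
  show ?thesis
  proof (rule set_integrable_bound[where f = "\<lambda>z. B n z * cnj (B n z) + B m z * cnj (B m z)"])
    show "set_integrable lborel ?A (\<lambda>z. B n z * cnj (B n z) + B m z * cnj (B m z))"
      using diag[OF n] diag[OF m] by (rule set_integral_add)
    have "(\<lambda>z. B n z * cnj (B m z)) \<in> borel_measurable borel"
      using cont[OF n] cont[OF m]
      by (intro borel_measurable_continuous_onI continuous_intros continuous_on_cnj)
    then show "set_borel_measurable lborel ?A (\<lambda>z. B n z * cnj (B m z))"
      unfolding set_borel_measurable_def using fund_dom_sets[OF w] by measurable
    show "AE x in lborel. x \<in> ?A \<longrightarrow>
        norm (B n x * cnj (B m x)) \<le> norm (B n x * cnj (B n x) + B m x * cnj (B m x))"
    proof (rule AE_I2, rule impI)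
      fix x
      have sq: "B n x * cnj (B n x) + B m x * cnj (B m x) =
          complex_of_real ((cmod (B n x))\<^sup>2 + (cmod (B m x))\<^sup>2)"
        by (simp only: complex_norm_square of_real_add)
      have "cmod (B n x) * cmod (B m x) \<le> (cmod (B n x))\<^sup>2 + (cmod (B m x))\<^sup>2"
        using sum_squares_bound[of "cmod (B n x)" "cmod (B m x)"]
          mult_nonneg_nonneg[OF norm_ge_zero norm_ge_zero, of "B n x" "B m x"] by linarith
      then show "norm (B n x * cnj (B m x)) \<le> norm (B n x * cnj (B n x) + B m x * cnj (B m x))"
        unfolding sq norm_mult complex_mod_cnj norm_of_real by simp
    qed
  qed
qed

lemma innerH_expansion:
  fixes N :: int and B :: "int \<Rightarrow> complex \<Rightarrow> complex"
  assumes onb: "is_onb k e1 e2 N B" and w: "omega e1 e2 \<noteq> 0" and n0: "n0 \<in> {0..<N}"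
  shows "innerH e1 e2 (\<lambda>z. \<Sum>n\<in>{0..<N}. c n * B n z) (B n0) = c n0"
proof -
  let ?A = "fund_dom e1 e2"
  have "innerH e1 e2 (\<lambda>z. \<Sum>n\<in>{0..<N}. c n * B n z) (B n0)
      = integral\<^sup>L lborel (\<lambda>z. \<Sum>n\<in>{0..<N}. indicator ?A z *\<^sub>R (c n * (B n z * cnj (B n0 z))))"
    unfolding innerH_def set_lebesgue_integral_def
    by (simp add: sum_distrib_right scaleR_sum_right mult.assoc)
  also have "\<dots> = (\<Sum>n\<in>{0..<N}.
      integral\<^sup>L lborel (\<lambda>z. indicator ?A z *\<^sub>R (c n * (B n z * cnj (B n0 z)))))"
  proof (rule Bochner_Integration.integral_sum)
    fix n assume "n \<in> {0..<N}"
    then have "set_integrable lborel ?A (\<lambda>z. c n * (B n z * cnj (B n0 z)))"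
      by (intro set_integrable_mult_right onb_products_integrable[OF onb w _ n0])
    then show "integrable lborel (\<lambda>z. indicator ?A z *\<^sub>R (c n * (B n z * cnj (B n0 z))))"
      unfolding set_integrable_def .
  qed
  also have "\<dots> = (\<Sum>n\<in>{0..<N}. c n * innerH e1 e2 (B n) (B n0))"
    unfolding innerH_def set_lebesgue_integral_def[symmetric] by simp
  also have "\<dots> = (\<Sum>n\<in>{0..<N}. if n = n0 then c n else 0)"
    by (rule sum.cong) (use onb n0 in \<open>auto simp: is_onb_def\<close>)
  also have "\<dots> = c n0" using n0 by simp
  finally show ?thesis .
qed


section \<open>Expansion of Z^0_k in the basis Psi\<close>

text \<open>The lattice of H_{D,k} is contained in that of H_k, so H_k is a subspace of H_{D,k}.\<close>

lemma lattice_mono: "x \<in> lattice (of_nat D * mu) lam \<Longrightarrow> x \<in> lattice lam mu"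
proof -
  assume "x \<in> lattice (of_nat D * mu) lam"
  then obtain m n where x: "x = of_int m * (of_nat D * mu) + of_int n * lam"
    unfolding lattice_def by auto
  have "x = of_int n * lam + of_int (m * int D) * mu" unfolding x by (simp add: algebra_simps)
  then show ?thesis unfolding lattice_def by blast
qed

lemma Z0_in_Hspace:
  assumes XB: "is_xi_basis k lam mu Om xi"
  shows "Z0 k xi \<in> Hspace k (of_nat D * mu) lam"
proof -
  define C where "C = - (\<i> / (2 * complex_of_real (sqrt (real k))))"
  have Z: "Z0 k xi = (\<lambda>z. C * (\<Sum>l\<in>{0..<2 * int k}. xi l z))" unfolding Z0_def C_def ..
  have xi_H: "xi l \<in> Hspace k lam mu" if "l \<in> {0..<2 * int k}" for l
    using XB that unfolding is_xi_basis_def is_onb_def by blast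
  then have "\<forall>l\<in>{0..<2 * int k}. \<exists>f. f holomorphic_on UNIV \<and>
      (\<forall>z. xi l z = complex_of_real (exp (- (real k * (cmod z)\<^sup>2 / 4))) * f z)"
    unfolding Hspace_def holo_sec_def by blast
  then obtain F where F: "\<And>l. l \<in> {0..<2 * int k} \<Longrightarrow> F l holomorphic_on UNIV \<and>
      (\<forall>z. xi l z = complex_of_real (exp (- (real k * (cmod z)\<^sup>2 / 4))) * F l z)"
    by metis
  have "holo_sec k (Z0 k xi)"
    unfolding holo_sec_def
  proof (intro exI conjI allI)
    show "(\<lambda>z. C * (\<Sum>l\<in>{0..<2 * int k}. F l z)) holomorphic_on UNIV"
      using F by (intro holomorphic_intros) auto
    show "Z0 k xi z = complex_of_real (exp (- (real k * (cmod z)\<^sup>2 / 4))) *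
        (C * (\<Sum>l\<in>{0..<2 * int k}. F l z))" for z
      unfolding Z using F by (simp add: sum_distrib_left mult.left_commute)
  qed
  moreover have "Tstar k x (Z0 k xi) = Z0 k xi" if x: "x \<in> lattice (of_nat D * mu) lam" for x
  proof -
    have "Tstar k x (xi l) = xi l" if "l \<in> {0..<2 * int k}" for l
      using xi_H[OF that] lattice_mono[OF x] unfolding Hspace_def by blast
    then show ?thesis unfolding Z Tstar_scal Tstar_sum by simp
  qed
  ultimately show ?thesis unfolding Hspace_def by blast
qed

text \<open>L permutes the xi_l cyclically, so it fixes their sum Z^0_k.\<close>

lemma Z0_L_invariant:
  assumes kpos: "0 < k" and XB: "is_xi_basis k lam mu Om xi"
  shows "Lop k lam (Z0 k xi) = Z0 k xi"
proof -
  have per: "xi l = xi (l mod (2 * int k))" for l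
    using XB unfolding is_xi_basis_def is_onb_def by blast
  have shift: "Lop k lam (xi l) = xi (l - 1)" for l
    using XB unfolding is_xi_basis_def by blast
  have "(\<Sum>l\<in>{0..<2 * int k}. xi (l - 1) z) = (\<Sum>l\<in>{0..<2 * int k}. xi l z)" for z
  proof -
    have "(\<Sum>l\<in>{0..<2 * int k}. xi (l - 1) z) =
        (\<Sum>l\<in>{0..<2 * int k}. (\<lambda>l. xi l z) ((l + (-1)) mod (2 * int k)))"
      by (rule sum.cong) (use per in auto)
    also have "\<dots> = (\<Sum>l\<in>{0..<2 * int k}. xi l z)"
      by (rule sum_mod_shift) (use kpos in simp)
    finally show ?thesis .
  qed
  then show ?thesis
    using shift unfolding Z0_def Lop_def Tstar_scal Tstar_sum by simp
qed

context
  fixes D k :: nat and lam mu :: complex and Psi :: "int \<Rightarrow> complex \<Rightarrow> complex"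
  assumes kpos: "0 < k" and Dpos: "0 < D"
    and om: "omega mu lam = 4 * pi"
    and PB: "is_Psi_basis D k lam mu Psi"
begin

text \<open>An L-invariant combination of the Psi_n only involves n divisible by 2k: averaging
  the identity F = L^j F over j < 2k multiplies the coefficient of Psi_n by the average of
  q^(nj), which vanishes unless 2k divides n.\<close>

lemma L_invariant_expansion:
  assumes inv: "Lop k lam F = F"
    and c: "F = (\<lambda>z. \<Sum>n\<in>{0..<2 * int k * int D}. c n * Psi n z)"
  shows "F = (\<lambda>z. \<Sum>m\<in>{0..<int D}. c (2 * int k * m) * Psi (2 * int k * m) z)"
proof
  fix z
  let ?I = "{0..<2 * int k * int D}"
  have lin_L: "lin (Lop k lam)" unfolding Lop_def by (rule lin_Tstar)
  have L_funpow: "(Lop k lam ^^ j) (Psi n) = (\<lambda>z. qpow k (real_of_int n) ^ j * Psi n z)" for j n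
    by (rule lin_eigen_funpow[OF lin_L L_eigen[OF kpos Dpos om PB]])
  have each: "F z = (\<Sum>n\<in>?I. c n * (qpow k (real_of_int n) ^ j * Psi n z))" for j
  proof -
    have "(Lop k lam ^^ j) F = F" by (induction j) (simp_all add: inv)
    then have "F = (Lop k lam ^^ j) (\<lambda>z. \<Sum>n\<in>?I. c n * Psi n z)" using c by simp
    also have "\<dots> = (\<lambda>z. \<Sum>n\<in>?I. c n * (Lop k lam ^^ j) (Psi n) z)"
      using lin_funpow[OF lin_L, of j] unfolding lin_def by blast
    finally show ?thesis unfolding L_funpow by simp
  qed
  have "F z = (\<Sum>j<2 * k. F z) / of_nat (2 * k)" using kpos by simp
  also have "\<dots> = (\<Sum>j<2 * k. \<Sum>n\<in>?I. c n * (qpow k (real_of_int n) ^ j * Psi n z)) / of_nat (2 * k)"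
    using each by simp
  also have "\<dots> = (\<Sum>n\<in>?I. c n * Psi n z * ((\<Sum>j<2 * k. qpow k (real_of_int n) ^ j) / of_nat (2 * k)))"
    by (subst sum.swap)
      (simp add: sum_divide_distrib sum_distrib_left sum_distrib_right algebra_simps)
  also have "\<dots> = (\<Sum>n\<in>{0..<int (2 * k) * int D}. if int (2 * k) dvd n then c n * Psi n z else 0)"
    by (rule sum.cong) (simp, subst qpow_average[OF kpos], simp)
  also have "\<dots> = (\<Sum>m\<in>{0..<int D}. c (2 * int k * m) * Psi (2 * int k * m) z)"
    by (subst sum_multiples) (use kpos in simp_all)
  finally show "F z = (\<Sum>m\<in>{0..<int D}. c (2 * int k * m) * Psi (2 * int k * m) z)" .
qed

lemma Z0_expansion:
  assumes XB: "is_xi_basis k lam mu Om xi"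
  shows "Z0 k xi = (\<lambda>z. \<Sum>m\<in>{0..<int D}.
            innerH (of_nat D * mu) lam (Z0 k xi) (Psi (2 * int k * m)) * Psi (2 * int k * m) z)"
proof -
  have onb: "is_onb k (of_nat D * mu) lam (2 * int k * int D) Psi"
    using PB unfolding is_Psi_basis_def by blast
  obtain c where c: "Z0 k xi = (\<lambda>z. \<Sum>n\<in>{0..<2 * int k * int D}. c n * Psi n z)"
    using onb Z0_in_Hspace[OF XB] unfolding is_onb_def by blast
  have nondeg: "omega (of_nat D * mu) lam \<noteq> 0"
    using om Dpos omega_scale_left[of "real D" mu lam] by simp
  have coeff: "c (2 * int k * m) = innerH (of_nat D * mu) lam (Z0 k xi) (Psi (2 * int k * m))"
    if "m \<in> {0..<int D}" for m
    unfolding c using that kpos by (intro innerH_expansion[OF onb nondeg, symmetric]) simp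
  have "Z0 k xi = (\<lambda>z. \<Sum>m\<in>{0..<int D}. c (2 * int k * m) * Psi (2 * int k * m) z)"
    by (rule L_invariant_expansion[OF Z0_L_invariant[OF kpos XB] c])
  also have "\<dots> = (\<lambda>z. \<Sum>m\<in>{0..<int D}.
      innerH (of_nat D * mu) lam (Z0 k xi) (Psi (2 * int k * m)) * Psi (2 * int k * m) z)"
    using coeff by (intro ext sum.cong) simp_all
  finally show ?thesis .
qed

lemma ipow_A_Z0:
  assumes XB: "is_xi_basis k lam mu Om xi"
  shows "ipow (Aop k mu) N (Z0 k xi) = (\<lambda>z. \<Sum>m\<in>{0..<int D}.
            innerH (of_nat D * mu) lam (Z0 k xi) (Psi (2 * int k * m)) *
            (qpow k (shift_phase D (2 * int k * m) N) * Psi (2 * int k * m + N) z))"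
proof -
  define co where "co m = innerH (of_nat D * mu) lam (Z0 k xi) (Psi (2 * int k * m))" for m
  have Z0_co: "Z0 k xi = (\<lambda>z. \<Sum>m\<in>{0..<int D}. co m * Psi (2 * int k * m) z)"
    using Z0_expansion[OF XB] unfolding co_def .
  have "ipow (Aop k mu) N (Z0 k xi) =
      (\<lambda>z. \<Sum>m\<in>{0..<int D}. co m * ipow (Aop k mu) N (Psi (2 * int k * m)) z)"
    unfolding Z0_co by (rule lin_ipow_Aop[unfolded lin_def, rule_format])
  then show ?thesis unfolding co_def ipow_A_Psi[OF kpos Dpos om PB] .
qed

end

lemma phase_identity:
  assumes "0 < a" "0 < b" "i \<in> {1..4::nat}"
  shows "eps_i i + shift_phase (2 * a * b) 0 (p_i a b i - int a * int b) =
     - (real a ^ 2 + real b ^ 2) / real (2 * a * b) + real (2 * a * b) / 4"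
proof -
  have "i = 1 \<or> i = 2 \<or> i = 3 \<or> i = 4" using assms(3) by auto
  then show ?thesis using assms(1,2)
    by (elim disjE) (simp_all add: shift_phase_def eps_i_def p_i_def field_simps power2_eq_square)
qed

text \<open>The theorem for fixed k and i: the coefficients are
  alpha_m = q^eps_i <Z^0_k, Psi_(2km)> q^(shift_phase D (2km) (p_i - ab)).\<close>

lemma knot_state_coefficients:
  fixes a b k i :: nat
  assumes a: "0 < a" and b: "0 < b" and kpos: "0 < k" and i: "i \<in> {1..4}"
    and om: "omega mu lam = 4 * pi"
    and XB: "is_xi_basis k lam mu Om xi"
    and PB: "is_Psi_basis (2 * a * b) k lam mu Psi"
  shows "\<exists>\<alpha>. (\<lambda>z. qpow k (eps_i i) * ipow (Aop k mu) (p_i a b i - int a * int b) (Z0 k xi) z)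
           = (\<lambda>z. \<Sum>m\<in>{0..<int (2 * a * b)}. \<alpha> m * Psi (2 * int k * m - int a * int b + p_i a b i) z)
         \<and> \<alpha> 0 = innerH (of_nat (2 * a * b) * mu) lam (Z0 k xi) (Psi 0)
                  * qpow k (- (real a ^ 2 + real b ^ 2) / real (2 * a * b) + real (2 * a * b) / 4)"
proof -
  have Dpos: "0 < 2 * a * b" using a b by simp
  define N where "N = p_i a b i - int a * int b"
  define \<alpha> where "\<alpha> m = qpow k (eps_i i) *
      innerH (of_nat (2 * a * b) * mu) lam (Z0 k xi) (Psi (2 * int k * m)) *
      qpow k (shift_phase (2 * a * b) (2 * int k * m) N)" for m
  have expansion: "(\<lambda>z. qpow k (eps_i i) * ipow (Aop k mu) N (Z0 k xi) z) =
      (\<lambda>z. \<Sum>m\<in>{0..<int (2 * a * b)}. \<alpha> m * Psi (2 * int k * m - int a * int b + p_i a b i) z)"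
    unfolding ipow_A_Z0[OF kpos Dpos om PB XB] \<alpha>_def
    by (simp add: sum_distrib_left N_def algebra_simps)
  have "\<alpha> 0 = innerH (of_nat (2 * a * b) * mu) lam (Z0 k xi) (Psi 0) *
      qpow k (eps_i i + shift_phase (2 * a * b) 0 N)"
    unfolding \<alpha>_def qpow_add by simp
  then have alpha0: "\<alpha> 0 = innerH (of_nat (2 * a * b) * mu) lam (Z0 k xi) (Psi 0) *
      qpow k (- (real a ^ 2 + real b ^ 2) / real (2 * a * b) + real (2 * a * b) / 4)"
    unfolding N_def phase_identity[OF a b i] .
  show ?thesis
    unfolding N_def[symmetric] by (rule exI[of _ \<alpha>], rule conjI[OF expansion alpha0])
qed

theorem mainTheorem6:
  fixes a b :: nat and lam mu Om_mu Om_lam :: complex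
    and xi Psi :: "nat \<Rightarrow> int \<Rightarrow> complex \<Rightarrow> complex"
  assumes "0 < a" "0 < b" "coprime a b"
    and "omega mu lam = 4 * pi"
    and "is_Omega mu Om_mu"
    and "\<forall>k>0. is_xi_basis k lam mu Om_mu (xi k)"
    and "is_Omega lam Om_lam"
    and "rapid_decay (\<lambda>k. Z0 k (xi k) 0 - exp (3 * \<i> * pi / 4) / complex_of_real (sqrt 2)
            * complex_of_real ((real k / (2 * pi)) powr (1/4)) * Om_lam)"
    and "\<forall>k>0. is_Psi_basis (2 * a * b) k lam mu (Psi k)"
    and "rapid_decay (\<lambda>k. Psi k 0 0 - exp (\<i> * pi / 4)
            * complex_of_real ((real k / (2 * pi)) powr (1/4)) * Om_lam)"
  shows "\<forall>k>0. \<forall>i\<in>{1..4::nat}. \<exists>\<alpha> :: int \<Rightarrow> complex.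
           (\<lambda>z. qpow k (eps_i i) *
              ipow (\<lambda>\<Phi> w. qpow k (-1) * Mop k mu \<Phi> w) (p_i a b i - int a * int b) (Z0 k (xi k)) z)
           = (\<lambda>z. \<Sum>m\<in>{0..<int (2 * a * b)}.
                  \<alpha> m * Psi k (2 * int k * m - int a * int b + p_i a b i) z)
         \<and> \<alpha> 0 = innerH (of_nat (2 * a * b) * mu) lam (Z0 k (xi k)) (Psi k 0)
                  * qpow k (- (real a ^ 2 + real b ^ 2) / real (2 * a * b) + real (2 * a * b) / 4)"
proof (intro allI impI ballI)
  fix k i :: nat
  assume k: "0 < k" and i: "i \<in> {1..4}"
  have XB: "is_xi_basis k lam mu Om_mu (xi k)" using assms(6) k by blast
  have PB: "is_Psi_basis (2 * a * b) k lam mu (Psi k)" using assms(9) k by blast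
  show "\<exists>\<alpha> :: int \<Rightarrow> complex.
           (\<lambda>z. qpow k (eps_i i) *
              ipow (\<lambda>\<Phi> w. qpow k (-1) * Mop k mu \<Phi> w) (p_i a b i - int a * int b) (Z0 k (xi k)) z)
           = (\<lambda>z. \<Sum>m\<in>{0..<int (2 * a * b)}.
                  \<alpha> m * Psi k (2 * int k * m - int a * int b + p_i a b i) z)
         \<and> \<alpha> 0 = innerH (of_nat (2 * a * b) * mu) lam (Z0 k (xi k)) (Psi k 0)
                  * qpow k (- (real a ^ 2 + real b ^ 2) / real (2 * a * b) + real (2 * a * b) / 4)"
    using knot_state_coefficients[OF assms(1,2) k i assms(4) XB PB] unfolding Aop_def .
qed

end
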